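(* Let $(\Omega,\Sigma,\mu)$ be a finite measure space and let $X(\mu)$ be a Banach rectangular function space. The following are equivalent: (i) $X(\mu)$ has the subsequence property; (ii) the inclusion $X(\mu)\subseteq L^0(\mu)$ is continuous, where $L^0(\mu)$ carries the topology of convergence in measure; (iii) the positive cone $X(\mu)^+=\{f\in X(\mu):f\ge 0\ \mu\text{-a.e.}\}$ is closed in $X(\mu)$.
   Context: $L^0(\mu)$ is the space of equivalence classes (modulo $\mu$-a.e. equality) of real $\Sigma$-measurable functions on $\Omega$. A Banach rectangular function space is a vector subspace $X(\mu)\subseteq L^0(\mu)$ with a complete norm such that for some $C>0$, $\chi_Af\in X(\mu)$ and $\|\chi_Af\|\le C\|f\|$ for all $f\in X(\mu)$, $A\in\Sigma$. The subsequence property: whenever $f_n,f\in X(\mu)$ and $f_n\to f$ in norm, some subsequence converges to $f$ $\mu$-a.e. *)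

theory Defs
  imports "HOL-Analysis.Analysis"
begin

text \<open>Elements of L^0(mu) are represented by real measurable functions; a function space
X(mu) is represented by a set X of representatives that is saturated under mu-a.e. equality,
and the norm nrm is a function on representatives that is invariant under a.e. equality
and vanishes exactly on the null class (so it is a norm on the equivalence classes).\<close>

definition banach_rectangular_fs ::
  "'a measure \<Rightarrow> ('a \<Rightarrow> real) set \<Rightarrow> (('a \<Rightarrow> real) \<Rightarrow> real) \<Rightarrow> bool" where
  "banach_rectangular_fs M X nrm \<longleftrightarrow>
     \<comment> \<open>subset of L^0, saturated under a.e. equality\<close>
     X \<subseteq> borel_measurable M \<and>
     (\<forall>f\<in>X. \<forall>g\<in>borel_measurable M. (AE x in M. f x = g x) \<longrightarrow> g \<in> X) \<and>
     \<comment> \<open>vector subspace\<close>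
     (\<lambda>x. 0) \<in> X \<and>
     (\<forall>f\<in>X. \<forall>g\<in>X. (\<lambda>x. f x + g x) \<in> X) \<and>
     (\<forall>c::real. \<forall>f\<in>X. (\<lambda>x. c * f x) \<in> X) \<and>
     \<comment> \<open>norm on equivalence classes\<close>
     (\<forall>f\<in>X. \<forall>g\<in>X. (AE x in M. f x = g x) \<longrightarrow> nrm f = nrm g) \<and>
     (\<forall>f\<in>X. 0 \<le> nrm f) \<and>
     (\<forall>f\<in>X. nrm f = 0 \<longleftrightarrow> (AE x in M. f x = 0)) \<and>
     (\<forall>c::real. \<forall>f\<in>X. nrm (\<lambda>x. c * f x) = \<bar>c\<bar> * nrm f) \<and>
     (\<forall>f\<in>X. \<forall>g\<in>X. nrm (\<lambda>x. f x + g x) \<le> nrm f + nrm g) \<and>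
     \<comment> \<open>completeness\<close>
     (\<forall>fs. (\<forall>n. fs n \<in> X) \<longrightarrow>
        (\<forall>e>0. \<exists>N. \<forall>m\<ge>N. \<forall>n\<ge>N. nrm (\<lambda>x. fs m x - fs n x) < e) \<longrightarrow>
        (\<exists>f\<in>X. (\<lambda>n. nrm (\<lambda>x. fs n x - f x)) \<longlonglongrightarrow> 0)) \<and>
     \<comment> \<open>rectangular (ideal-like under multiplication by indicators)\<close>
     (\<exists>C>0. \<forall>f\<in>X. \<forall>A\<in>sets M.
        (\<lambda>x. indicator A x * f x) \<in> X \<and> nrm (\<lambda>x. indicator A x * f x) \<le> C * nrm f)"

definition subsequence_property ::
  "'a measure \<Rightarrow> ('a \<Rightarrow> real) set \<Rightarrow> (('a \<Rightarrow> real) \<Rightarrow> real) \<Rightarrow> bool" where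
  "subsequence_property M X nrm \<longleftrightarrow>
     (\<forall>fs f. (\<forall>n. fs n \<in> X) \<longrightarrow> f \<in> X \<longrightarrow>
        (\<lambda>n. nrm (\<lambda>x. fs n x - f x)) \<longlonglongrightarrow> 0 \<longrightarrow>
        (\<exists>r. strict_mono r \<and> (AE x in M. (\<lambda>n. fs (r n) x) \<longlonglongrightarrow> f x)))"

text \<open>Continuity of the inclusion X \<subseteq> L^0 (topology of convergence in measure, whose
neighbourhood base at f is {g. mu{|g - f| > eps} < delta}), at every point of X.\<close>
definition inclusion_L0_continuous ::
  "'a measure \<Rightarrow> ('a \<Rightarrow> real) set \<Rightarrow> (('a \<Rightarrow> real) \<Rightarrow> real) \<Rightarrow> bool" where
  "inclusion_L0_continuous M X nrm \<longleftrightarrow>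
     (\<forall>f\<in>X. \<forall>\<epsilon>>0. \<forall>\<delta>>0. \<exists>r>0. \<forall>g\<in>X. nrm (\<lambda>x. g x - f x) < r \<longrightarrow>
        measure M {x\<in>space M. \<bar>g x - f x\<bar> > \<epsilon>} < \<delta>)"

definition positive_cone ::
  "'a measure \<Rightarrow> ('a \<Rightarrow> real) set \<Rightarrow> ('a \<Rightarrow> real) set" where
  "positive_cone M X = {f\<in>X. AE x in M. 0 \<le> f x}"

definition cone_closed ::
  "'a measure \<Rightarrow> ('a \<Rightarrow> real) set \<Rightarrow> (('a \<Rightarrow> real) \<Rightarrow> real) \<Rightarrow> bool" where
  "cone_closed M X nrm \<longleftrightarrow>
     (\<forall>f\<in>X. (\<forall>e>0. \<exists>g\<in>positive_cone M X. nrm (\<lambda>x. g x - f x) < e) \<longrightarrow>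
        f \<in> positive_cone M X)"

end

theory Submission
  imports Defs
begin

text \<open>
  (i) \<Longrightarrow> (iii): a function in the norm closure of the cone is the norm limit of positive
  functions, hence the a.e.\ limit of a subsequence of them, hence positive.
  (ii) \<Longrightarrow> (i): continuity turns norm convergence into convergence in measure, and on a
  finite measure space a sequence converging in measure has an a.e.\ convergent subsequence
  (Borel--Cantelli).
  (iii) \<Longrightarrow> (ii): if continuity fails, there are \<open>\<delta> > 0\<close> and \<open>h\<^sub>k \<in> X\<close> of arbitrarily small
  norm with \<open>\<mu>{h\<^sub>k > 1} \<ge> \<delta>\<close>. Rectangularity makes \<open>t\<^sub>k = (k+1) \<chi>\<^bsub>{h\<^sub>k > 1}\<^esub> h\<^sub>k\<close> positive elements
  of \<open>X\<close> with summable norms, so their series converges to some \<open>u \<in> X\<close>; closedness of the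
  cone gives \<open>u \<ge> t\<^sub>k \<ge> k + 1\<close> a.e.\ on \<open>{h\<^sub>k > 1}\<close>. Thus \<open>\<mu>{u \<ge> k + 1} \<ge> \<delta>\<close> for all \<open>k\<close>, which
  is impossible for a real-valued function on a finite measure space.
\<close>

lemma subseq_eventually_choice:
  assumes "\<And>k. eventually (P k) sequentially"
  obtains r :: "nat \<Rightarrow> nat" where "strict_mono r" "\<And>k. P k (r k)"
proof -
  have "\<exists>m. P k m \<and> n < m" for k n
    using eventually_conj[OF assms eventually_gt_at_top[of n]]
    by (auto simp: eventually_sequentially)
  then have "\<exists>r. \<forall>k. P k (r k) \<and> r k < r (Suc k)"
    by (intro dependent_nat_choice) auto
  then show ?thesis
    using that by (auto simp: strict_mono_Suc_iff)
qed

lemma (in finite_measure) tendsto_in_measure_imp_AE_subseq: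
  fixes fs :: "nat \<Rightarrow> 'a \<Rightarrow> real"
  assumes [measurable]: "\<And>n. fs n \<in> borel_measurable M" "f \<in> borel_measurable M"
    and in_measure: "\<And>\<epsilon>. \<epsilon> > 0 \<Longrightarrow> (\<lambda>n. measure M {x\<in>space M. \<epsilon> < \<bar>fs n x - f x\<bar>}) \<longlonglongrightarrow> 0"
  obtains r where "strict_mono r" "AE x in M. (\<lambda>k. fs (r k) x) \<longlonglongrightarrow> f x"
proof -
  define A where "A k n = {x\<in>space M. (1/2)^k < \<bar>fs n x - f x\<bar>}" for k n
  have [measurable]: "A k n \<in> sets M" for k n
    unfolding A_def by measurable
  have "eventually (\<lambda>n. measure M (A k n) < (1/2)^k) sequentially" for k :: nat
    using order_tendstoD(2)[OF in_measure] by (simp add: A_def)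
  then obtain r where r: "strict_mono r" and small: "\<And>k. measure M (A k (r k)) < (1/2)^k"
    by (rule subseq_eventually_choice[where P = "\<lambda>k n. measure M (A k n) < (1/2)^k"]) blast
  have "summable (\<lambda>k. measure M (A k (r k)))"
    by (rule summable_comparison_test'[OF summable_geometric[of "1/2::real"]])
      (use small in \<open>auto simp: less_imp_le\<close>)
  then have "AE x in M. eventually (\<lambda>k. x \<in> space M - A k (r k)) sequentially"
    by (intro borel_cantelli_AE1) (auto simp: emeasure_eq_measure)
  then have "AE x in M. (\<lambda>k. fs (r k) x) \<longlonglongrightarrow> f x"
  proof eventually_elim
    case (elim x)
    then have "eventually (\<lambda>k. norm (fs (r k) x - f x) \<le> (1/2)^k) sequentially"
      by eventually_elim (auto simp: A_def)
    then have "(\<lambda>k. fs (r k) x - f x) \<longlonglongrightarrow> 0"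
      by (rule Lim_null_comparison) (simp add: LIMSEQ_power_zero)
    then show ?case
      by (rule LIM_zero_cancel)
  qed
  with r that show ?thesis by blast
qed

lemma (in finite_measure) tendsto_measure_ge_of_nat:
  assumes [measurable]: "u \<in> borel_measurable M"
  shows "(\<lambda>n. measure M {x\<in>space M. real n \<le> u x}) \<longlonglongrightarrow> 0"
proof -
  have "(\<lambda>n. measure M {x\<in>space M. real n \<le> u x}) \<longlonglongrightarrow> measure M (\<Inter>n. {x\<in>space M. real n \<le> u x})"
    by (rule finite_Lim_measure_decseq) (auto simp: decseq_def order_trans)
  moreover have "\<exists>n. \<not> real n \<le> u x" for x
    using reals_Archimedean2[of "u x"] by (auto simp: not_le)
  then have "(\<Inter>n. {x\<in>space M. real n \<le> u x}) = {}"
    by blast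
  ultimately show ?thesis by simp
qed

lemma cone_closed_tendsto_in_cone:
  assumes "cone_closed M X nrm" "w \<in> X" "\<And>n. g n \<in> positive_cone M X"
    and "(\<lambda>n. nrm (\<lambda>x. g n x - w x)) \<longlonglongrightarrow> 0"
  shows "w \<in> positive_cone M X"
proof -
  have "\<exists>g\<in>positive_cone M X. nrm (\<lambda>x. g x - w x) < e" if "e > 0" for e
    using order_tendstoD(2)[OF assms(4) that] assms(3)
    by (auto simp: eventually_sequentially)
  with assms(1,2) show ?thesis
    unfolding cone_closed_def by blast
qed

locale banach_rectangular_space =
  fixes M :: "'a measure" and X :: "('a \<Rightarrow> real) set" and nrm :: "('a \<Rightarrow> real) \<Rightarrow> real"
  assumes banach_rectangular_fs: "banach_rectangular_fs M X nrm"
begin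

lemma measurable_X: "f \<in> X \<Longrightarrow> f \<in> borel_measurable M"
  using banach_rectangular_fs unfolding banach_rectangular_fs_def by blast

lemma zero_in_X: "(\<lambda>x. 0) \<in> X"
  using banach_rectangular_fs unfolding banach_rectangular_fs_def by blast

lemma add_in_X: "f \<in> X \<Longrightarrow> g \<in> X \<Longrightarrow> (\<lambda>x. f x + g x) \<in> X"
  using banach_rectangular_fs unfolding banach_rectangular_fs_def by blast

lemma scale_in_X: "f \<in> X \<Longrightarrow> (\<lambda>x. c * f x) \<in> X"
  using banach_rectangular_fs unfolding banach_rectangular_fs_def by blast

lemma diff_in_X:
  assumes "f \<in> X" "g \<in> X"
  shows "(\<lambda>x. f x - g x) \<in> X"
  using add_in_X[OF assms(1) scale_in_X[OF assms(2), of "-1"]] by simp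

lemma sum_in_X: "(\<And>k. k \<in> S \<Longrightarrow> t k \<in> X) \<Longrightarrow> (\<lambda>x. \<Sum>k\<in>S. t k x) \<in> X"
  by (induction S rule: infinite_finite_induct) (auto intro: zero_in_X add_in_X)

lemma nrm_nonneg: "f \<in> X \<Longrightarrow> 0 \<le> nrm f"
  using banach_rectangular_fs unfolding banach_rectangular_fs_def by blast

lemma nrm_scale: "f \<in> X \<Longrightarrow> nrm (\<lambda>x. c * f x) = \<bar>c\<bar> * nrm f"
  using banach_rectangular_fs unfolding banach_rectangular_fs_def by blast

lemma nrm_zero: "nrm (\<lambda>x. 0) = 0"
  using nrm_scale[OF zero_in_X, of 0] by simp

lemma nrm_triangle: "f \<in> X \<Longrightarrow> g \<in> X \<Longrightarrow> nrm (\<lambda>x. f x + g x) \<le> nrm f + nrm g"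
  using banach_rectangular_fs unfolding banach_rectangular_fs_def by blast

lemma nrm_minus_commute:
  assumes "f \<in> X" "g \<in> X"
  shows "nrm (\<lambda>x. f x - g x) = nrm (\<lambda>x. g x - f x)"
  using nrm_scale[OF diff_in_X[OF assms(2,1)], of "-1"] by simp

lemma nrm_sum_le: "(\<And>k. k \<in> S \<Longrightarrow> t k \<in> X) \<Longrightarrow> nrm (\<lambda>x. \<Sum>k\<in>S. t k x) \<le> (\<Sum>k\<in>S. nrm (t k))"
proof (induction S rule: infinite_finite_induct)
  case (insert k S)
  then have "nrm (\<lambda>x. t k x + (\<Sum>k\<in>S. t k x)) \<le> nrm (t k) + nrm (\<lambda>x. \<Sum>k\<in>S. t k x)"
    by (intro nrm_triangle sum_in_X) auto
  with insert show ?case by simp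
qed (simp_all add: nrm_zero)

lemma complete:
  assumes "\<And>n. fs n \<in> X" "\<And>e. e > 0 \<Longrightarrow> \<exists>N. \<forall>m\<ge>N. \<forall>n\<ge>N. nrm (\<lambda>x. fs m x - fs n x) < e"
  obtains f where "f \<in> X" "(\<lambda>n. nrm (\<lambda>x. fs n x - f x)) \<longlonglongrightarrow> 0"
  using banach_rectangular_fs assms unfolding banach_rectangular_fs_def by blast

lemma rectangular:
  obtains C where "C > 0"
    and "\<And>f A. f \<in> X \<Longrightarrow> A \<in> sets M \<Longrightarrow> (\<lambda>x. indicator A x * f x) \<in> X"
    and "\<And>f A. f \<in> X \<Longrightarrow> A \<in> sets M \<Longrightarrow> nrm (\<lambda>x. indicator A x * f x) \<le> C * nrm f"
  using banach_rectangular_fs unfolding banach_rectangular_fs_def by metis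

lemma summable_nrm_imp_series_converges:
  assumes t: "\<And>k. t k \<in> X" and summable: "summable (\<lambda>k. nrm (t k))"
  obtains u where "u \<in> X" "(\<lambda>n. nrm (\<lambda>x. (\<Sum>k<n. t k x) - u x)) \<longlonglongrightarrow> 0"
proof (rule complete)
  show partial_sum_in_X: "(\<lambda>x. \<Sum>k<n. t k x) \<in> X" for n
    by (rule sum_in_X) (rule t)
  fix e :: real assume "e > 0"
  then obtain N where N: "\<And>m n. m \<ge> N \<Longrightarrow> norm (\<Sum>k=m..<n. nrm (t k)) < e"
    using summable unfolding summable_Cauchy by blast
  have close: "nrm (\<lambda>x. (\<Sum>k<m. t k x) - (\<Sum>k<n. t k x)) < e" if "N \<le> n" "n \<le> m" for m n
  proof -
    have "nrm (\<lambda>x. (\<Sum>k<m. t k x) - (\<Sum>k<n. t k x)) = nrm (\<lambda>x. \<Sum>k=n..<m. t k x)"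
      using \<open>n \<le> m\<close> by (simp add: lessThan_atLeast0 sum_diff_nat_ivl)
    also have "\<dots> \<le> (\<Sum>k=n..<m. nrm (t k))"
      by (rule nrm_sum_le) (rule t)
    also have "\<dots> < e"
      using N[OF \<open>N \<le> n\<close>, of m] by simp
    finally show ?thesis .
  qed
  show "\<exists>N. \<forall>m\<ge>N. \<forall>n\<ge>N. nrm (\<lambda>x. (\<Sum>k<m. t k x) - (\<Sum>k<n. t k x)) < e"
  proof (intro exI allI impI)
    fix m n assume "N \<le> m" "N \<le> n"
    show "nrm (\<lambda>x. (\<Sum>k<m. t k x) - (\<Sum>k<n. t k x)) < e"
    proof (cases "n \<le> m")
      case True
      with close \<open>N \<le> n\<close> show ?thesis by blast
    next
      case False
      with close[where m = n and n = m] \<open>N \<le> m\<close> show ?thesis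
        using nrm_minus_commute[OF partial_sum_in_X partial_sum_in_X, of m n] by linarith
    qed
  qed
qed

lemma cone_closed_imp_series_dominates_terms:
  assumes closed: "cone_closed M X nrm" and t: "\<And>k. t k \<in> positive_cone M X"
    and summable: "summable (\<lambda>k. nrm (t k))"
  obtains u where "u \<in> X" "\<And>k. AE x in M. t k x \<le> u x"
proof -
  have tX: "t k \<in> X" for k
    using t by (simp add: positive_cone_def)
  have t_nonneg: "AE x in M. \<forall>j. 0 \<le> t j x"
    using t by (simp add: positive_cone_def AE_all_countable)
  obtain u where u: "u \<in> X" and lim: "(\<lambda>n. nrm (\<lambda>x. (\<Sum>k<n. t k x) - u x)) \<longlonglongrightarrow> 0"
    using summable_nrm_imp_series_converges[OF tX summable] by blast
  have "AE x in M. t k x \<le> u x" for k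
  proof -
    have "(\<lambda>x. u x - t k x) \<in> positive_cone M X"
    proof (rule cone_closed_tendsto_in_cone[OF closed diff_in_X[OF u tX]])
      have "AE x in M. t k x \<le> (\<Sum>j<n + Suc k. t j x)" for n
        using t_nonneg by eventually_elim (rule member_le_sum, auto)
      moreover have "(\<lambda>x. (\<Sum>j<n + Suc k. t j x) - t k x) \<in> X" for n
        by (intro diff_in_X sum_in_X tX)
      ultimately show "(\<lambda>x. (\<Sum>j<n + Suc k. t j x) - t k x) \<in> positive_cone M X" for n
        by (simp add: positive_cone_def del: sum.lessThan_Suc)
      show "(\<lambda>n. nrm (\<lambda>x. (\<Sum>j<n + Suc k. t j x) - t k x - (u x - t k x))) \<longlonglongrightarrow> 0"
        using LIMSEQ_ignore_initial_segment[OF lim, of "Suc k"] by (simp del: sum.lessThan_Suc)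
    qed
    then show ?thesis
      by (simp add: positive_cone_def)
  qed
  with u that show ?thesis by blast
qed

lemma subsequence_property_imp_cone_closed:
  assumes subseq: "subsequence_property M X nrm"
  shows "cone_closed M X nrm"
  unfolding cone_closed_def
proof (intro ballI impI)
  fix f assume f: "f \<in> X" and approx: "\<forall>e>0. \<exists>g\<in>positive_cone M X. nrm (\<lambda>x. g x - f x) < e"
  then have "\<forall>n. \<exists>g\<in>positive_cone M X. nrm (\<lambda>x. g x - f x) < inverse (real (Suc n))"
    by simp
  then obtain g where g: "\<And>n. g n \<in> positive_cone M X"
    and close: "\<And>n. nrm (\<lambda>x. g n x - f x) < inverse (real (Suc n))"
    by metis
  have gX: "g n \<in> X" for n
    using g by (simp add: positive_cone_def)
  have "norm (nrm (\<lambda>x. g n x - f x)) \<le> inverse (real (Suc n))" for n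
    using close[of n] nrm_nonneg[OF diff_in_X[OF gX f]] by simp
  then have "(\<lambda>n. nrm (\<lambda>x. g n x - f x)) \<longlonglongrightarrow> 0"
    by (intro Lim_null_comparison[OF always_eventually LIMSEQ_inverse_real_of_nat]) blast
  then obtain r where "AE x in M. (\<lambda>n. g (r n) x) \<longlonglongrightarrow> f x"
    using subseq gX f unfolding subsequence_property_def by blast
  moreover have "AE x in M. \<forall>n. 0 \<le> g n x"
    using g by (simp add: positive_cone_def AE_all_countable)
  ultimately have "AE x in M. 0 \<le> f x"
    by eventually_elim (auto intro: LIMSEQ_le_const)
  with f show "f \<in> positive_cone M X"
    by (simp add: positive_cone_def)
qed

lemma inclusion_L0_continuous_imp_tendsto_in_measure:
  assumes cont: "inclusion_L0_continuous M X nrm" and "f \<in> X" "\<And>n. fs n \<in> X"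
    and lim: "(\<lambda>n. nrm (\<lambda>x. fs n x - f x)) \<longlonglongrightarrow> 0" and "\<epsilon> > 0"
  shows "(\<lambda>n. measure M {x\<in>space M. \<epsilon> < \<bar>fs n x - f x\<bar>}) \<longlonglongrightarrow> 0"
proof (rule order_tendstoI)
  fix \<delta> :: real assume "\<delta> > 0"
  then obtain r where "r > 0"
    and r: "\<forall>g\<in>X. nrm (\<lambda>x. g x - f x) < r \<longrightarrow> measure M {x\<in>space M. \<epsilon> < \<bar>g x - f x\<bar>} < \<delta>"
    using cont \<open>f \<in> X\<close> \<open>\<epsilon> > 0\<close> unfolding inclusion_L0_continuous_def by blast
  show "eventually (\<lambda>n. measure M {x\<in>space M. \<epsilon> < \<bar>fs n x - f x\<bar>} < \<delta>) sequentially"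
    using order_tendstoD(2)[OF lim \<open>r > 0\<close>] by eventually_elim (use r assms(3) in blast)
qed (auto intro!: always_eventually order_less_le_trans[OF _ measure_nonneg])

lemma inclusion_L0_continuousI:
  assumes small: "\<And>\<delta>. \<delta> > 0 \<Longrightarrow> \<exists>r>0. \<forall>h\<in>X. nrm h < r \<longrightarrow> measure M {x\<in>space M. 1 < h x} < \<delta>"
  shows "inclusion_L0_continuous M X nrm"
  unfolding inclusion_L0_continuous_def
proof (intro ballI allI impI)
  fix f and \<epsilon> \<delta> :: real assume f: "f \<in> X" and "\<epsilon> > 0" "\<delta> > 0"
  then obtain r where "r > 0"
    and r: "\<And>h. h \<in> X \<Longrightarrow> nrm h < r \<Longrightarrow> measure M {x\<in>space M. 1 < h x} < \<delta>/2"
    using small[of "\<delta>/2"] by auto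
  show "\<exists>r>0. \<forall>g\<in>X. nrm (\<lambda>x. g x - f x) < r \<longrightarrow> measure M {x\<in>space M. \<bar>g x - f x\<bar> > \<epsilon>} < \<delta>"
  proof (intro exI[of _ "\<epsilon> * r"] conjI ballI impI)
    show "0 < \<epsilon> * r"
      using \<open>\<epsilon> > 0\<close> \<open>r > 0\<close> by simp
    fix g assume g: "g \<in> X" and close: "nrm (\<lambda>x. g x - f x) < \<epsilon> * r"
    have [measurable]: "g \<in> borel_measurable M" "f \<in> borel_measurable M"
      using measurable_X g f by auto
    define h where "h c = (\<lambda>x. c / \<epsilon> * (g x - f x))" for c
    have h_small: "measure M {x\<in>space M. 1 < h c x} < \<delta>/2" if "\<bar>c\<bar> = 1" for c
    proof (rule r)
      show "h c \<in> X"
        unfolding h_def by (intro scale_in_X diff_in_X g f)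
      have "nrm (h c) = nrm (\<lambda>x. g x - f x) / \<epsilon>"
        using nrm_scale[OF diff_in_X[OF g f], of "c / \<epsilon>"] \<open>\<epsilon> > 0\<close> that by (simp add: h_def)
      then show "nrm (h c) < r"
        using close \<open>\<epsilon> > 0\<close> by (simp add: divide_less_eq mult.commute)
    qed
    have "{x\<in>space M. \<epsilon> < \<bar>g x - f x\<bar>} = {x\<in>space M. 1 < h 1 x} \<union> {x\<in>space M. 1 < h (-1) x}"
      using \<open>\<epsilon> > 0\<close> by (auto simp: h_def less_divide_eq divide_less_eq abs_if)
    then have "measure M {x\<in>space M. \<epsilon> < \<bar>g x - f x\<bar>} \<le>
        measure M {x\<in>space M. 1 < h 1 x} + measure M {x\<in>space M. 1 < h (-1) x}"
      by (simp add: measure_Un_le h_def)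
    with h_small[of 1] h_small[of "-1"] show "measure M {x\<in>space M. \<bar>g x - f x\<bar> > \<epsilon>} < \<delta>"
      by simp
  qed
qed

lemma rectangular_superlevel_cut:
  obtains C where "C > 0" and "\<And>h c. h \<in> X \<Longrightarrow> 0 \<le> c \<Longrightarrow>
    \<exists>t\<in>positive_cone M X. nrm t \<le> c * C * nrm h \<and> (\<forall>x\<in>space M. 1 < h x \<longrightarrow> c \<le> t x)"
proof -
  obtain C where "C > 0"
    and rect_X: "\<And>f A. f \<in> X \<Longrightarrow> A \<in> sets M \<Longrightarrow> (\<lambda>x. indicator A x * f x) \<in> X"
    and rect_nrm: "\<And>f A. f \<in> X \<Longrightarrow> A \<in> sets M \<Longrightarrow> nrm (\<lambda>x. indicator A x * f x) \<le> C * nrm f"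
    by (rule rectangular) blast
  have "\<exists>t\<in>positive_cone M X. nrm t \<le> c * C * nrm h \<and> (\<forall>x\<in>space M. 1 < h x \<longrightarrow> c \<le> t x)"
    if h: "h \<in> X" and "0 \<le> c" for h c
  proof -
    have [measurable]: "h \<in> borel_measurable M"
      using measurable_X h by auto
    define A where "A = {x\<in>space M. 1 < h x}"
    have A: "A \<in> sets M"
      unfolding A_def by measurable
    define t where "t = (\<lambda>x. c * (indicator A x * h x))"
    have "t \<in> X"
      unfolding t_def by (intro scale_in_X rect_X h A)
    moreover have "0 \<le> t x" for x
      using \<open>0 \<le> c\<close> by (simp add: t_def A_def indicator_def)
    ultimately have "t \<in> positive_cone M X"
      by (simp add: positive_cone_def)
    moreover have "nrm t \<le> c * C * nrm h"
      using nrm_scale[OF rect_X[OF h A]] rect_nrm[OF h A] \<open>0 \<le> c\<close>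
      by (simp add: t_def mult_left_mono mult.assoc)
    moreover have "c \<le> t x" if "x \<in> space M" "1 < h x" for x
      using that \<open>0 \<le> c\<close> by (simp add: t_def A_def mult_le_cancel_left1)
    ultimately show ?thesis by blast
  qed
  with \<open>C > 0\<close> that show ?thesis by blast
qed

end

locale finite_banach_rectangular_space = finite_measure M + banach_rectangular_space M X nrm
  for M :: "'a measure" and X nrm
begin

lemma inclusion_L0_continuous_imp_subsequence_property:
  assumes cont: "inclusion_L0_continuous M X nrm"
  shows "subsequence_property M X nrm"
  unfolding subsequence_property_def
proof (intro allI impI)
  fix fs f assume fsX: "\<forall>n. fs n \<in> X" and f: "f \<in> X" and lim: "(\<lambda>n. nrm (\<lambda>x. fs n x - f x)) \<longlonglongrightarrow> 0"
  have in_measure: "(\<lambda>n. measure M {x\<in>space M. \<epsilon> < \<bar>fs n x - f x\<bar>}) \<longlonglongrightarrow> 0"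
    if "\<epsilon> > 0" for \<epsilon>
    using inclusion_L0_continuous_imp_tendsto_in_measure[OF cont f _ lim that] fsX by blast
  have "fs n \<in> borel_measurable M" "f \<in> borel_measurable M" for n
    using measurable_X fsX f by auto
  then obtain r where "strict_mono r" "AE x in M. (\<lambda>k. fs (r k) x) \<longlonglongrightarrow> f x"
    by (rule tendsto_in_measure_imp_AE_subseq[OF _ _ in_measure]) blast
  then show "\<exists>r. strict_mono r \<and> (AE x in M. (\<lambda>n. fs (r n) x) \<longlonglongrightarrow> f x)"
    by blast
qed

lemma small_norm_large_superlevel_in_cone:
  assumes big: "\<And>r. r > 0 \<Longrightarrow> \<exists>h\<in>X. nrm h < r \<and> \<delta> \<le> measure M {x\<in>space M. 1 < h x}"
    and "e > 0" "c > 0"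
  obtains t where "t \<in> positive_cone M X" "nrm t \<le> e" "\<delta> \<le> measure M {x\<in>space M. c \<le> t x}"
proof -
  obtain C where "C > 0" and cut: "\<And>h c. h \<in> X \<Longrightarrow> 0 \<le> c \<Longrightarrow>
      \<exists>t\<in>positive_cone M X. nrm t \<le> c * C * nrm h \<and> (\<forall>x\<in>space M. 1 < h x \<longrightarrow> c \<le> t x)"
    by (rule rectangular_superlevel_cut) blast
  obtain h where h: "h \<in> X" and h_small: "nrm h < e / (c * C)"
    and h_big: "\<delta> \<le> measure M {x\<in>space M. 1 < h x}"
    using big[of "e / (c * C)"] \<open>e > 0\<close> \<open>c > 0\<close> \<open>C > 0\<close> by auto
  obtain t where t: "t \<in> positive_cone M X" and t_small: "nrm t \<le> c * C * nrm h"
    and t_big: "\<forall>x\<in>space M. 1 < h x \<longrightarrow> c \<le> t x"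
    using cut[OF h] \<open>c > 0\<close> by (meson less_imp_le)
  have "c * C * nrm h < e"
    using h_small \<open>c > 0\<close> \<open>C > 0\<close> by (simp add: pos_less_divide_eq mult.commute)
  have [measurable]: "h \<in> borel_measurable M" "t \<in> borel_measurable M"
    using measurable_X h t by (auto simp: positive_cone_def)
  have "measure M {x\<in>space M. 1 < h x} \<le> measure M {x\<in>space M. c \<le> t x}"
    using t_big by (intro finite_measure_mono) auto
  with h_big have "\<delta> \<le> measure M {x\<in>space M. c \<le> t x}"
    by linarith
  moreover have "nrm t \<le> e"
    using t_small \<open>c * C * nrm h < e\<close> by linarith
  ultimately show ?thesis
    using t that by blast
qed

lemma cone_closed_imp_nrm_small_measure_small:
  assumes closed: "cone_closed M X nrm" and "\<delta> > 0"
  shows "\<exists>r>0. \<forall>h\<in>X. nrm h < r \<longrightarrow> measure M {x\<in>space M. 1 < h x} < \<delta>"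
proof (rule ccontr)
  assume "\<not> ?thesis"
  then have "\<exists>h\<in>X. nrm h < r \<and> \<delta> \<le> measure M {x\<in>space M. 1 < h x}" if "r > 0" for r
    using that by (fastforce simp: not_less)
  then have "\<exists>t. t \<in> positive_cone M X \<and> nrm t \<le> (1/2)^k \<and>
      \<delta> \<le> measure M {x\<in>space M. real (Suc k) \<le> t x}" for k
    by (rule small_norm_large_superlevel_in_cone[of _ "(1/2)^k" "real (Suc k)"]) auto
  then obtain t where t: "\<And>k. t k \<in> positive_cone M X" and t_small: "\<And>k. nrm (t k) \<le> (1/2)^k"
    and t_big: "\<And>k. \<delta> \<le> measure M {x\<in>space M. real (Suc k) \<le> t k x}"
    by metis
  have tX: "t k \<in> X" for k
    using t by (simp add: positive_cone_def)
  have summable: "summable (\<lambda>k. nrm (t k))"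
    by (rule summable_comparison_test'[OF summable_geometric[of "1/2::real"]])
      (use t_small nrm_nonneg[OF tX] in auto)
  obtain u where u: "u \<in> X" and t_le_u: "\<And>k. AE x in M. t k x \<le> u x"
    by (rule cone_closed_imp_series_dominates_terms[OF closed t summable]) blast
  have [measurable]: "u \<in> borel_measurable M" "t k \<in> borel_measurable M" for k
    using measurable_X u tX by auto
  have "\<delta> \<le> measure M {x\<in>space M. real (Suc k) \<le> u x}" for k
  proof -
    have "measure M {x\<in>space M. real (Suc k) \<le> t k x} \<le> measure M {x\<in>space M. real (Suc k) \<le> u x}"
      using t_le_u[of k] by (intro finite_measure_mono_AE) (auto elim!: eventually_mono)
    with t_big[of k] show ?thesis by simp
  qed
  moreover have "(\<lambda>k. measure M {x\<in>space M. real (Suc k) \<le> u x}) \<longlonglongrightarrow> 0"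
    using LIMSEQ_Suc[OF tendsto_measure_ge_of_nat[of u]] by simp
  ultimately have "\<delta> \<le> 0"
    by (intro LIMSEQ_le_const) auto
  with \<open>\<delta> > 0\<close> show False by simp
qed

end

theorem lemma2p8:
  fixes M :: "'a measure" and X :: "('a \<Rightarrow> real) set" and nrm :: "('a \<Rightarrow> real) \<Rightarrow> real"
  assumes "finite_measure M"
    and "banach_rectangular_fs M X nrm"
  shows "(subsequence_property M X nrm \<longleftrightarrow> inclusion_L0_continuous M X nrm) \<and>
         (inclusion_L0_continuous M X nrm \<longleftrightarrow> cone_closed M X nrm)"
proof -
  interpret finite_banach_rectangular_space M X nrm
    using assms by (intro finite_banach_rectangular_space.intro banach_rectangular_space.intro)
  have "subsequence_property M X nrm \<Longrightarrow> cone_closed M X nrm"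
    by (rule subsequence_property_imp_cone_closed)
  moreover have "cone_closed M X nrm \<Longrightarrow> inclusion_L0_continuous M X nrm"
    by (intro inclusion_L0_continuousI cone_closed_imp_nrm_small_measure_small)
  moreover have "inclusion_L0_continuous M X nrm \<Longrightarrow> subsequence_property M X nrm"
    by (rule inclusion_L0_continuous_imp_subsequence_property)
  ultimately show ?thesis
    by blast
qed

end
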